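(* Consider the discrete first-price auction in the model with ties with $n=2$ bidders whose values are drawn independently and uniformly from $X=\{0,1,\dots,x\}$. There is no symmetric equilibrium $\beta$ with a value $v\in X$, $v\ge1$, and an integer $k\ge2$ such that $\beta(v-1)=\beta(v)-k$ and $\beta(v)\ge(2-\sqrt3)\,v$.
   Context: Model. Two risk-neutral bidders compete for one indivisible object. Values and bids lie in $X=\{0,1,2,\dots,x\}$; each bidder's value is drawn independently and uniformly from $X$. A (pure) strategy is a bidding function $\beta:X\to X$. In the model with ties, the higher bidder wins and, if the two bids are equal, each wins with probability $1/2$. In the first-price auction, a bidder with value $v_i$ bidding $b_i$ gets expected payoff $(v_i-b_i)\Pr(i\text{ wins})$. An equilibrium is a profile of bidding functions such that each bidder's bidding function maximises their expected payoff given the other's (a pure-strategy Bayes–Nash equilibrium) and such that no bidder uses a weakly dominated bidding function (a bidding function is weakly dominated if some other bidding function yields at least as high expected payoff against every opponent bidding function, and strictly higher against some). A symmetric equilibrium is an equilibrium in which both bidders use the same bidding function. *)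

theory Defs
  imports Complex_Main
begin

text \<open>A bidding function is a map
  nat => nat sending X into X (values outside X are irrelevant).\<close>

definition bidfun :: "nat \<Rightarrow> (nat \<Rightarrow> nat) \<Rightarrow> bool" where
  "bidfun x \<beta> \<longleftrightarrow> (\<forall>v\<in>{0..x}. \<beta> v \<in> {0..x})"

definition win_prob :: "nat \<Rightarrow> nat \<Rightarrow> (nat \<Rightarrow> nat) \<Rightarrow> real" where
  "win_prob x b \<beta>' =
     (\<Sum>w=0..x. (if \<beta>' w < b then 1 else if \<beta>' w = b then 1/2 else 0)) / real (x + 1)"

definition interim_payoff :: "nat \<Rightarrow> nat \<Rightarrow> nat \<Rightarrow> (nat \<Rightarrow> nat) \<Rightarrow> real" where
  "interim_payoff x v b \<beta>' = (real v - real b) * win_prob x b \<beta>'"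

definition exp_payoff :: "nat \<Rightarrow> (nat \<Rightarrow> nat) \<Rightarrow> (nat \<Rightarrow> nat) \<Rightarrow> real" where
  "exp_payoff x \<beta> \<beta>' = (\<Sum>v=0..x. interim_payoff x v (\<beta> v) \<beta>') / real (x + 1)"

definition best_response :: "nat \<Rightarrow> (nat \<Rightarrow> nat) \<Rightarrow> (nat \<Rightarrow> nat) \<Rightarrow> bool" where
  "best_response x \<beta> \<beta>' \<longleftrightarrow> bidfun x \<beta> \<and>
     (\<forall>\<gamma>. bidfun x \<gamma> \<longrightarrow> exp_payoff x \<gamma> \<beta>' \<le> exp_payoff x \<beta> \<beta>')"

definition weakly_dominated :: "nat \<Rightarrow> (nat \<Rightarrow> nat) \<Rightarrow> bool" where
  "weakly_dominated x \<beta> \<longleftrightarrow> (\<exists>\<gamma>. bidfun x \<gamma> \<and>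
     (\<forall>\<beta>'. bidfun x \<beta>' \<longrightarrow> exp_payoff x \<beta> \<beta>' \<le> exp_payoff x \<gamma> \<beta>') \<and>
     (\<exists>\<beta>'. bidfun x \<beta>' \<and> exp_payoff x \<beta> \<beta>' < exp_payoff x \<gamma> \<beta>'))"

definition equilibrium :: "nat \<Rightarrow> (nat \<Rightarrow> nat) \<Rightarrow> (nat \<Rightarrow> nat) \<Rightarrow> bool" where
  "equilibrium x \<beta>1 \<beta>2 \<longleftrightarrow> best_response x \<beta>1 \<beta>2 \<and> best_response x \<beta>2 \<beta>1 \<and>
     \<not> weakly_dominated x \<beta>1 \<and> \<not> weakly_dominated x \<beta>2"

definition symmetric_equilibrium :: "nat \<Rightarrow> (nat \<Rightarrow> nat) \<Rightarrow> bool" where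
  "symmetric_equilibrium x \<beta> \<longleftrightarrow> equilibrium x \<beta> \<beta>"

end

theory Submission
  imports Defs
begin

text \<open>A symmetric best response is monotone, so if the bid jumps from c = \<beta>(v-1) to
  b = \<beta> v \<ge> c + 2, every bid strictly between c and b beats exactly the v values below v.
  Comparing the payoff of b with the deviation of value v to b - 1 and of the highest value
  bidding b to b + 1 forces exactly three values to tie at b and 3(v - b) = 2v.  The deviations
  of value v to c and to c + 1 and of value v - 1 to b - 1 then leave no consistent number of
  values bidding c.\<close>

definition win_count :: "nat \<Rightarrow> (nat \<Rightarrow> nat) \<Rightarrow> nat \<Rightarrow> nat" where
  "win_count x \<beta> b = card {w\<in>{0..x}. \<beta> w < b} + card {w\<in>{0..x}. \<beta> w \<le> b}"

lemma real_card_filter_eq_sum: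
  "finite A \<Longrightarrow> real (card {w\<in>A. P w}) = (\<Sum>w\<in>A. if P w then 1 else 0)"
  by (simp add: sum.inter_filter[symmetric])

lemma win_prob_eq_win_count:
  "win_prob x b \<beta> = real (win_count x \<beta> b) / (2 * real (x + 1))"
proof -
  have "(\<Sum>w=0..x. if \<beta> w < b then 1 else if \<beta> w = b then 1/2 else 0 :: real)
      = (\<Sum>w=0..x. ((if \<beta> w < b then 1 else 0) + (if \<beta> w \<le> b then 1 else 0)) / 2)"
    by (rule sum.cong) auto
  also have "\<dots> = real (win_count x \<beta> b) / 2"
    unfolding win_count_def of_nat_add real_card_filter_eq_sum[OF finite_atLeastAtMost]
    by (simp add: sum.distrib sum_divide_distrib[symmetric])
  finally show ?thesis
    by (simp add: win_prob_def field_simps)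
qed

lemma win_count_strict_mono:
  assumes "w \<le> x" "b < \<beta> w"
  shows "win_count x \<beta> b < win_count x \<beta> (\<beta> w)"
proof -
  have "card {z\<in>{0..x}. \<beta> z < b} \<le> card {z\<in>{0..x}. \<beta> z < \<beta> w}"
    using assms by (intro card_mono) auto
  moreover have "card {z\<in>{0..x}. \<beta> z \<le> b} < card {z\<in>{0..x}. \<beta> z \<le> \<beta> w}"
  proof (rule psubset_card_mono)
    have "w \<in> {z\<in>{0..x}. \<beta> z \<le> \<beta> w} - {z\<in>{0..x}. \<beta> z \<le> b}"
      using assms by auto
    moreover have "{z\<in>{0..x}. \<beta> z \<le> b} \<subseteq> {z\<in>{0..x}. \<beta> z \<le> \<beta> w}"
      using assms by auto
    ultimately show "{z\<in>{0..x}. \<beta> z \<le> b} \<subset> {z\<in>{0..x}. \<beta> z \<le> \<beta> w}"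
      by blast
  qed simp
  ultimately show ?thesis
    by (simp add: win_count_def)
qed

lemma exp_payoff_fun_upd:
  assumes "v \<le> x"
  shows "exp_payoff x (\<beta>(v := c)) \<beta>' = exp_payoff x \<beta> \<beta>'
           + (interim_payoff x v c \<beta>' - interim_payoff x v (\<beta> v) \<beta>') / real (x + 1)"
proof -
  have v: "v \<in> {0..x}" using assms by simp
  have "(\<Sum>w=0..x. interim_payoff x w ((\<beta>(v := c)) w) \<beta>')
      = interim_payoff x v c \<beta>' + (\<Sum>w\<in>{0..x}-{v}. interim_payoff x w (\<beta> w) \<beta>')"
    using sum.remove[OF _ v, of "\<lambda>w. interim_payoff x w ((\<beta>(v := c)) w) \<beta>'"] by simp
  moreover have "(\<Sum>w=0..x. interim_payoff x w (\<beta> w) \<beta>')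
      = interim_payoff x v (\<beta> v) \<beta>' + (\<Sum>w\<in>{0..x}-{v}. interim_payoff x w (\<beta> w) \<beta>')"
    using sum.remove[OF _ v] by simp
  ultimately show ?thesis
    by (simp add: exp_payoff_def diff_divide_distrib add_divide_distrib)
qed

lemma best_response_interim_optimal:
  assumes br: "best_response x \<beta> \<beta>'" and "v \<le> x" and "c \<le> x"
  shows "(int v - int c) * int (win_count x \<beta>' c)
           \<le> (int v - int (\<beta> v)) * int (win_count x \<beta>' (\<beta> v))"
proof -
  have "bidfun x (\<beta>(v := c))"
    using br \<open>c \<le> x\<close> by (auto simp: best_response_def bidfun_def)
  then have "exp_payoff x (\<beta>(v := c)) \<beta>' \<le> exp_payoff x \<beta> \<beta>'"
    using br by (simp add: best_response_def)
  then have "interim_payoff x v c \<beta>' \<le> interim_payoff x v (\<beta> v) \<beta>'"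
    by (simp add: exp_payoff_fun_upd[OF \<open>v \<le> x\<close>] divide_le_0_iff)
  then have "(real v - real c) * real (win_count x \<beta>' c)
               \<le> (real v - real (\<beta> v)) * real (win_count x \<beta>' (\<beta> v))"
    by (simp add: interim_payoff_def win_prob_eq_win_count times_divide_eq_right divide_le_cancel
        add_pos_nonneg)
  then have "real_of_int ((int v - int c) * int (win_count x \<beta>' c))
               \<le> real_of_int ((int v - int (\<beta> v)) * int (win_count x \<beta>' (\<beta> v)))"
    by simp
  then show ?thesis
    by linarith
qed

lemma best_response_self_mono:
  assumes br: "best_response x \<beta> \<beta>"
  shows "mono_on {0..x} \<beta>"
proof (rule mono_onI, rule ccontr)
  fix w w' assume "w \<in> {0..x}" "w' \<in> {0..x}" "w \<le> w'" "\<not> \<beta> w \<le> \<beta> w'"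
  then have "w < w'" "w' \<le> x" "\<beta> w' < \<beta> w" by (auto simp: order_le_less)
  have "\<beta> w \<le> x" "\<beta> w' \<le> x"
    using br \<open>w' \<le> x\<close> \<open>w < w'\<close> by (auto simp: best_response_def bidfun_def)
  define D where "D = (\<lambda>z. int (win_count x \<beta> (\<beta> z)))"
  have "(int w - int (\<beta> w')) * D w' \<le> (int w - int (\<beta> w)) * D w"
    using best_response_interim_optimal[OF br _ \<open>\<beta> w' \<le> x\<close>, of w] \<open>w < w'\<close> \<open>w' \<le> x\<close>
    by (simp add: D_def)
  moreover have "(int w' - int (\<beta> w)) * D w \<le> (int w' - int (\<beta> w')) * D w'"
    using best_response_interim_optimal[OF br \<open>w' \<le> x\<close> \<open>\<beta> w \<le> x\<close>] by (simp add: D_def)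
  moreover have "0 < (int w' - int w) * (D w - D w')"
    using win_count_strict_mono[of w x "\<beta> w'" \<beta>] \<open>w < w'\<close> \<open>w' \<le> x\<close> \<open>\<beta> w' < \<beta> w\<close>
    by (simp add: D_def)
  ultimately show False
    by (simp add: algebra_simps)
qed

context
  fixes x v :: nat and \<beta> :: "nat \<Rightarrow> nat"
  assumes mono: "mono_on {0..x} \<beta>" and v: "1 \<le> v" "v \<le> x"
begin

lemma bids_le_in_gap:
  assumes "\<beta> (v - 1) \<le> t" "t < \<beta> v"
  shows "{w\<in>{0..x}. \<beta> w \<le> t} = {0..<v}"
proof (intro set_eqI iffI)
  fix w assume "w \<in> {w\<in>{0..x}. \<beta> w \<le> t}"
  then show "w \<in> {0..<v}"
    using mono_onD[OF mono, of v w] assms v by (cases "v \<le> w") auto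
next
  fix w assume "w \<in> {0..<v}"
  then have "w \<le> v - 1" "v - 1 \<le> x"
    using v by auto
  then show "w \<in> {w\<in>{0..x}. \<beta> w \<le> t}"
    using mono_onD[OF mono, of w "v - 1"] assms by auto
qed

lemma bids_less_in_gap:
  assumes "\<beta> (v - 1) < t" "t \<le> \<beta> v"
  shows "{w\<in>{0..x}. \<beta> w < t} = {0..<v}"
proof -
  have "{w\<in>{0..x}. \<beta> w < t} = {w\<in>{0..x}. \<beta> w \<le> t - 1}"
    using assms by auto
  also have "\<dots> = {0..<v}"
    using assms by (intro bids_le_in_gap) auto
  finally show ?thesis .
qed

lemma win_count_in_gap:
  assumes "\<beta> (v - 1) < t" "t < \<beta> v"
  shows "win_count x \<beta> t = 2 * v"
  using bids_le_in_gap[of t] bids_less_in_gap[of t] assms by (simp add: win_count_def)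

lemma win_count_at_gap_bottom:
  assumes "\<beta> (v - 1) < \<beta> v"
  shows "win_count x \<beta> (\<beta> (v - 1)) = card {w\<in>{0..x}. \<beta> w < \<beta> (v - 1)} + v"
  unfolding win_count_def bids_le_in_gap[OF order.refl assms] by simp

text \<open>The witnesses are q, the number of values bidding at most \<beta> v, and u, the largest of them.\<close>

lemma ties_at_gap_top:
  assumes "\<beta> (v - 1) < \<beta> v"
  obtains q u where "v < q" "v \<le> u" "u \<le> x" "\<beta> u = \<beta> v" "q \<le> u + 1"
    "win_count x \<beta> (\<beta> v) = v + q" "2 * q \<le> win_count x \<beta> (Suc (\<beta> v))"
proof -
  define T where "T = {w\<in>{0..x}. \<beta> w \<le> \<beta> v}"
  have below: "{w\<in>{0..x}. \<beta> w < \<beta> v} = {0..<v}"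
    using bids_less_in_gap[OF assms order.refl] .
  have "finite T" "v \<in> T"
    using v by (simp_all add: T_def)
  moreover have "{0..<v} \<subseteq> T"
    unfolding below[symmetric] T_def by auto
  ultimately have "{0..v} \<subseteq> T"
    unfolding ivl_disj_un_singleton(6)[OF le0, symmetric] by simp
  then have "v < card T"
    using card_mono[OF \<open>finite T\<close>, of "{0..v}"] by simp
  moreover have "Max T \<in> T" "v \<le> Max T"
    using \<open>finite T\<close> \<open>v \<in> T\<close> by (auto intro: Max_in)
  moreover have "card T \<le> Max T + 1"
    using card_le_Suc_Max[OF \<open>finite T\<close>] by simp
  moreover have "Max T \<le> x" "\<beta> (Max T) = \<beta> v"
    using \<open>Max T \<in> T\<close> \<open>v \<le> Max T\<close> mono_onD[OF mono, of v "Max T"] v by (auto simp: T_def)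
  moreover have "win_count x \<beta> (\<beta> v) = v + card T"
    unfolding win_count_def below by (simp add: T_def)
  moreover have "2 * card T \<le> win_count x \<beta> (Suc (\<beta> v))"
  proof -
    have "{w\<in>{0..x}. \<beta> w < Suc (\<beta> v)} = T"
      by (auto simp: T_def)
    moreover have "card T \<le> card {w\<in>{0..x}. \<beta> w \<le> Suc (\<beta> v)}"
      by (auto simp: T_def intro!: card_mono)
    ultimately show ?thesis
      by (simp add: win_count_def)
  qed
  ultimately show ?thesis
    using that by blast
qed

end

lemma gap_top_deviation_bounds:
  fixes v b q u :: int
  assumes "1 \<le> b" "b < v" "v < q" "q \<le> u + 1"
    and dev_down: "(v - b + 1) * (2 * v) \<le> (v - b) * (v + q)"
    and dev_up: "(u - b - 1) * (2 * q) \<le> (u - b) * (v + q)"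
  shows "q = v + 3 \<and> 3 * (v - b) = 2 * v"
proof -
  define d p where "d = v - b" and "p = q - v"
  have "0 < p" "b = v - d" "q = v + p" using assms by (simp_all add: d_def p_def)
  have down: "2 * v \<le> d * p"
    using dev_down unfolding \<open>b = v - d\<close> \<open>q = v + p\<close> by (simp add: algebra_simps)
  have up: "(u - b) * p \<le> 2 * v + 2 * p"
    using dev_up unfolding \<open>q = v + p\<close> by (simp add: algebra_simps)
  have "(d + p - 1) * p \<le> (u - b) * p"
    using assms \<open>0 < p\<close> by (intro mult_right_mono) (auto simp: d_def p_def)
  then have "(p - 1) * p \<le> 2 * p"
    using down up by (simp add: algebra_simps)
  then have "p \<le> 3"
    using \<open>0 < p\<close> by simp
  moreover have "p \<noteq> 1" "p \<noteq> 2"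
    using down assms by (auto simp: d_def)
  ultimately have "p = 3"
    using \<open>0 < p\<close> by linarith
  moreover have "3 * d = 2 * v"
    using down up \<open>(d + p - 1) * p \<le> (u - b) * p\<close> unfolding \<open>p = 3\<close> by (simp add: algebra_simps)
  ultimately show ?thesis
    by (simp add: \<open>q = v + p\<close> d_def)
qed

lemma symmetric_best_response_gap_top:
  assumes br: "best_response x \<beta> \<beta>" and v: "1 \<le> v" "v \<le> x"
    and gap: "\<beta> (v - 1) + 2 \<le> \<beta> v"
  shows "int (win_count x \<beta> (\<beta> v)) = 2 * int v + 3" "3 * (int v - int (\<beta> v)) = 2 * int v"
proof -
  have mono: "mono_on {0..x} \<beta>"
    using br by (rule best_response_self_mono)
  define b where "b = \<beta> v"
  have "b \<le> x"
    using br v by (auto simp: b_def best_response_def bidfun_def)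
  obtain q u where "v < q" "v \<le> u" "u \<le> x" "\<beta> u = b" "q \<le> u + 1"
    and count_b: "win_count x \<beta> b = v + q" and count_Suc_b: "2 * q \<le> win_count x \<beta> (Suc b)"
    using ties_at_gap_top[OF mono v] gap unfolding b_def by auto
  have dev_down: "(int v - int b + 1) * (2 * int v) \<le> (int v - int b) * (int v + int q)"
  proof -
    have "(int v - int (b - 1)) * int (win_count x \<beta> (b - 1))
            \<le> (int v - int b) * int (win_count x \<beta> b)"
      using best_response_interim_optimal[OF br v(2), of "b - 1"] \<open>b \<le> x\<close> by (simp add: b_def)
    then show ?thesis
      using win_count_in_gap[OF mono v, of "b - 1"] count_b gap
      by (simp add: b_def of_nat_diff algebra_simps)
  qed
  have "b < v"
  proof -
    have "0 < (int v - int b) * (int q - int v)"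
      using dev_down v by (simp add: algebra_simps)
    then show ?thesis
      using \<open>v < q\<close> by (simp add: zero_less_mult_iff)
  qed
  have dev_up: "(int u - int b - 1) * (2 * int q) \<le> (int u - int b) * (int v + int q)"
  proof -
    have "(int u - int b - 1) * (2 * int q) \<le> (int u - int b - 1) * int (win_count x \<beta> (Suc b))"
      using count_Suc_b \<open>b < v\<close> \<open>v \<le> u\<close> by (intro mult_left_mono) auto
    also have "\<dots> \<le> (int u - int b) * (int v + int q)"
      using best_response_interim_optimal[OF br \<open>u \<le> x\<close>, of "Suc b"] count_b
        \<open>b < v\<close> v \<open>\<beta> u = b\<close> by (simp add: algebra_simps)
    finally show ?thesis .
  qed
  have "int q = int v + 3 \<and> 3 * (int v - int b) = 2 * int v"
    using gap_top_deviation_bounds[OF _ _ _ _ dev_down dev_up] gap \<open>b < v\<close> \<open>v < q\<close> \<open>q \<le> u + 1\<close>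
    by (simp add: b_def)
  then show "int (win_count x \<beta> (\<beta> v)) = 2 * int v + 3" "3 * (int v - int (\<beta> v)) = 2 * int v"
    using count_b by (simp_all add: b_def)
qed

lemma gap_bottom_tie_count_impossible:
  fixes v d m :: int
  assumes d: "3 * d = 2 * v" "0 < d" and "0 \<le> v - d - 2" "v - d - 2 = 0 \<Longrightarrow> m = v"
    and "0 \<le> m" and lower: "2 * v \<le> (d + 2) * m" and upper: "(d + 1) * m \<le> 2 * v"
  shows False
proof -
  have "m \<le> 2"
  proof (rule ccontr)
    assume "\<not> m \<le> 2"
    then have "(d + 1) * 3 \<le> (d + 1) * m" using \<open>0 < d\<close> by (intro mult_left_mono) auto
    then show False using upper d(1) by simp
  qed
  then consider "m = 0" | "m = 1" | "m = 2" using \<open>0 \<le> m\<close> by linarith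
  then show False
  proof cases
    case 1
    then show ?thesis using lower d by simp
  next
    case 2
    then have "d = 1" using lower d by simp
    then show ?thesis using d(1) by presburger
  next
    case 3
    then have "2 \<le> d" "d \<le> 4" using lower upper d(1) by simp_all
    moreover have "d \<noteq> 3" using d(1) by presburger
    ultimately consider "d = 2" | "d = 4" by linarith
    then show ?thesis
      using assms \<open>m = 2\<close> by cases simp_all
  qed
qed

lemma gap_bottom_deviations_inconsistent:
  fixes v b c a :: int
  assumes "3 * (v - b) = 2 * v" "1 \<le> v" "0 \<le> c" "c + 2 \<le> b"
    and "0 \<le> a" "a \<le> v" "c = 0 \<Longrightarrow> a = 0"
    and dev_above_c: "(v - c - 1) * (2 * v) \<le> (v - b) * (2 * v + 3)"
    and dev_to_c: "(v - c) * (a + v) \<le> (v - b) * (2 * v + 3)"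
    and dev_of_pred: "(v - b) * (2 * v) \<le> (v - 1 - c) * (a + v)"
  shows False
proof -
  define d m where "d = v - b" and "m = v - a"
  have d: "3 * d = 2 * v" "0 < d" "b = v - d" and m: "0 \<le> m" "a = v - m"
    using assms by (simp_all add: d_def m_def)
  have "(b - c - 1) * (2 * v) \<le> 1 * (2 * v)"
    using dev_above_c assms(1) unfolding d_def by (simp add: algebra_simps)
  then have "b - c - 1 \<le> 1"
    by (rule mult_right_le_imp_le) (use \<open>1 \<le> v\<close> in simp)
  then have c: "c = v - d - 2"
    using \<open>c + 2 \<le> b\<close> d(3) by simp
  have "2 * v \<le> (d + 2) * m"
    using dev_to_c d(1) unfolding c d(3) m(2) by (simp add: algebra_simps)
  moreover have "(d + 1) * m \<le> 2 * v"
    using dev_of_pred unfolding c d(3) m(2) by (simp add: algebra_simps)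
  ultimately show False
    using gap_bottom_tie_count_impossible[OF d(1,2)] assms(3,7) m unfolding c by auto
qed

lemma symmetric_best_response_no_gap:
  assumes br: "best_response x \<beta> \<beta>" and v: "1 \<le> v" "v \<le> x"
    and gap: "\<beta> (v - 1) + 2 \<le> \<beta> v"
  shows False
proof -
  have mono: "mono_on {0..x} \<beta>"
    using br by (rule best_response_self_mono)
  define b c a where "b = \<beta> v" and "c = \<beta> (v - 1)"
    and "a = card {w\<in>{0..x}. \<beta> w < c}"
  have "c + 2 \<le> b" "b \<le> x"
    using gap br v by (auto simp: b_def c_def best_response_def bidfun_def)
  have count_b: "int (win_count x \<beta> b) = 2 * int v + 3" and three_d: "3 * (int v - int b) = 2 * int v"
    using symmetric_best_response_gap_top[OF br v gap] by (simp_all add: b_def)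
  have count_c: "win_count x \<beta> c = a + v"
    using win_count_at_gap_bottom[OF mono v] gap by (simp add: a_def c_def)
  have count_gap: "win_count x \<beta> t = 2 * v" if "c < t" "t < b" for t
    using win_count_in_gap[OF mono v] that by (simp add: b_def c_def)
  have "{w\<in>{0..x}. \<beta> w \<le> c} = {0..<v}"
    using bids_le_in_gap[OF mono v order.refl] gap by (simp add: c_def)
  moreover have "a \<le> card {w\<in>{0..x}. \<beta> w \<le> c}"
    unfolding a_def by (rule card_mono) auto
  ultimately have "a \<le> v"
    by simp
  have "c = 0 \<Longrightarrow> a = 0"
    by (simp add: a_def)
  have dev_above_c: "(int v - int c - 1) * (2 * int v) \<le> (int v - int b) * (2 * int v + 3)"
    using best_response_interim_optimal[OF br v(2), of "Suc c"] count_gap[of "Suc c"] count_b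
      \<open>c + 2 \<le> b\<close> \<open>b \<le> x\<close> by (simp add: b_def[symmetric] algebra_simps)
  have dev_to_c: "(int v - int c) * (int a + int v) \<le> (int v - int b) * (2 * int v + 3)"
    using best_response_interim_optimal[OF br v(2), of c] count_c count_b
      \<open>c + 2 \<le> b\<close> \<open>b \<le> x\<close> by (simp add: b_def[symmetric])
  have dev_of_pred: "(int v - int b) * (2 * int v) \<le> (int v - 1 - int c) * (int a + int v)"
  proof -
    have "(int (v - 1) - int (b - 1)) * int (win_count x \<beta> (b - 1))
            \<le> (int (v - 1) - int c) * int (win_count x \<beta> c)"
      using best_response_interim_optimal[OF br, of "v - 1" "b - 1"] \<open>b \<le> x\<close> v
      by (simp add: c_def)
    then show ?thesis
      using count_gap[of "b - 1"] count_c \<open>c + 2 \<le> b\<close> v by (simp add: of_nat_diff)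
  qed
  show False
    using gap_bottom_deviations_inconsistent[OF three_d _ _ _ _ _ _ dev_above_c dev_to_c dev_of_pred]
      v \<open>c + 2 \<le> b\<close> \<open>a \<le> v\<close> \<open>c = 0 \<Longrightarrow> a = 0\<close> by simp
qed

theorem lemma13:
  fixes x :: nat
  shows "\<not> (\<exists>\<beta> v (k::int). symmetric_equilibrium x \<beta> \<and> v \<in> {1..x} \<and> k \<ge> 2 \<and>
            int (\<beta> (v - 1)) = int (\<beta> v) - k \<and>
            real (\<beta> v) \<ge> (2 - sqrt 3) * real v)"
proof
  assume "\<exists>\<beta> v (k::int). symmetric_equilibrium x \<beta> \<and> v \<in> {1..x} \<and> k \<ge> 2 \<and>
            int (\<beta> (v - 1)) = int (\<beta> v) - k \<and>
            real (\<beta> v) \<ge> (2 - sqrt 3) * real v"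
  then obtain \<beta> v and k :: int where eq: "symmetric_equilibrium x \<beta>" and v: "1 \<le> v" "v \<le> x"
    and "k \<ge> 2" "int (\<beta> (v - 1)) = int (\<beta> v) - k"
    by auto
  then have "\<beta> (v - 1) + 2 \<le> \<beta> v"
    by linarith
  moreover have "best_response x \<beta> \<beta>"
    using eq by (simp add: symmetric_equilibrium_def equilibrium_def)
  ultimately show False
    using symmetric_best_response_no_gap v by blast
qed

end
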